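(* Let $a\in(0,1)$, $\kappa_2\in(0,1)$, and assume $\dfrac{4}{\kappa_2}\le r\le \dfrac{as}{\sqrt{5\log(8/\kappa_2)}}$. Then for every $\theta\in\mathcal{D}_{a,r}$, $$\|M(\theta)\|<\kappa_2\, r\,\|\theta^*\|.$$
   Context: Fix $d\ge1$, $\sigma>0$ and $\theta^*\in\mathbb{R}^d\setminus\{0\}$. Let $Y$ be distributed according to the mixture $\tfrac12 N(\theta^*,\sigma^2I_d)+\tfrac12 N(-\theta^*,\sigma^2I_d)$. Let $\omega(t):=1/(1+e^{-2t})$. The population EM operator is $M(\theta):=2\,\mathbb{E}\big[Y\,\omega(\langle\theta,Y\rangle/\sigma^2)\big]$. The signal-to-noise ratio is $s:=\|\theta^*\|/\sigma$. For $a\in(0,1)$ and $r\ge1$ define $\mathcal{H}_a:=\{\theta:\langle\theta,\theta^*\rangle\ge a\|\theta^*\|^2\}$, $\mathcal{B}_r:=\{\theta:\|\theta\|\le r\|\theta^*\|\}$ and $\mathcal{D}_{a,r}:=\mathcal{H}_a\cap\mathcal{B}_r$. *)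

theory Defs
  imports "HOL-Probability.Probability"
begin

definition gauss_density :: "real \<Rightarrow> 'a::euclidean_space \<Rightarrow> 'a \<Rightarrow> real" where
  "gauss_density \<sigma> \<mu> y =
     (2 * pi * \<sigma>\<^sup>2) powr (- real DIM('a) / 2) * exp (- (norm (y - \<mu>))\<^sup>2 / (2 * \<sigma>\<^sup>2))"

definition gmm_measure :: "real \<Rightarrow> 'a::euclidean_space \<Rightarrow> 'a measure" where
  "gmm_measure \<sigma> \<theta>s = density lborel
     (\<lambda>y. ennreal (1/2 * gauss_density \<sigma> \<theta>s y + 1/2 * gauss_density \<sigma> (- \<theta>s) y))"

definition omega :: "real \<Rightarrow> real" where
  "omega t = 1 / (1 + exp (- 2 * t))"

definition EM_op :: "real \<Rightarrow> 'a::euclidean_space \<Rightarrow> 'a \<Rightarrow> 'a" where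
  "EM_op \<sigma> \<theta>s \<theta> = 2 *\<^sub>R (\<integral>y. omega (inner \<theta> y / \<sigma>\<^sup>2) *\<^sub>R y \<partial>gmm_measure \<sigma> \<theta>s)"

definition snr :: "real \<Rightarrow> 'a::euclidean_space \<Rightarrow> real" where
  "snr \<sigma> \<theta>s = norm \<theta>s / \<sigma>"

definition H_set :: "'a::euclidean_space \<Rightarrow> real \<Rightarrow> 'a set" where
  "H_set \<theta>s a = {\<theta>. inner \<theta> \<theta>s \<ge> a * (norm \<theta>s)\<^sup>2}"

definition B_set :: "'a::euclidean_space \<Rightarrow> real \<Rightarrow> 'a set" where
  "B_set \<theta>s r = {\<theta>. norm \<theta> \<le> r * norm \<theta>s}"

definition D_set :: "'a::euclidean_space \<Rightarrow> real \<Rightarrow> real \<Rightarrow> 'a set" where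
  "D_set \<theta>s a r = H_set \<theta>s a \<inter> B_set \<theta>s r"

end

theory Submission
  imports Defs
begin

(* Since 0 <= omega <= 1, for every unit vector u
     omega(..) <y,u> <= |<y,u>| <= (<y,u>^2 + |theta*|^2) / (2 |theta*|),
   and integrating with E <Y,u>^2 = <theta*,u>^2 + sigma^2 <= |theta*|^2 + sigma^2 gives
   |M(theta)| <= 2 |theta*| + sigma^2 / |theta*| for every theta, whether in D_{a,r} or not.
   The hypotheses force 1 < r <= s and kappa_2 r >= 4, so this is below 3 |theta*| < kappa_2 r |theta*|. *)

lemma inner_sum_scaleR_Basis:
  "b \<in> Basis \<Longrightarrow> (\<Sum>c\<in>Basis. g c *\<^sub>R c) \<bullet> b = g (b::'a::euclidean_space)"
  by (simp add: inner_sum_left inner_Basis if_distrib cong: if_cong)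

lemma integrable_lborel_prod_Basis:
  fixes f :: "'a::euclidean_space \<Rightarrow> real \<Rightarrow> real"
  assumes "\<And>b. b \<in> Basis \<Longrightarrow> integrable lborel (f b)"
  shows "integrable (lborel::'a measure) (\<lambda>x. \<Prod>b\<in>Basis. f b (x \<bullet> b))"
proof -
  interpret product_sigma_finite "\<lambda>_::'a. lborel::real measure" by standard
  have [measurable]: "\<And>b. b \<in> Basis \<Longrightarrow> f b \<in> borel_measurable borel"
    using assms by auto
  show ?thesis
    by (subst lborel_eq, subst integrable_distr_eq)
      (auto simp: inner_sum_scaleR_Basis intro!: product_integrable_prod assms cong: prod.cong)
qed

lemma integral_lborel_prod_Basis:
  fixes f :: "'a::euclidean_space \<Rightarrow> real \<Rightarrow> real"
  assumes "\<And>b. b \<in> Basis \<Longrightarrow> integrable lborel (f b)"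
  shows "(\<integral>x. (\<Prod>b\<in>Basis. f b (x \<bullet> b)) \<partial>(lborel::'a measure)) = (\<Prod>b\<in>Basis. integral\<^sup>L lborel (f b))"
proof -
  interpret product_sigma_finite "\<lambda>_::'a. lborel::real measure" by standard
  have [measurable]: "\<And>b. b \<in> Basis \<Longrightarrow> f b \<in> borel_measurable borel"
    using assms by auto
  show ?thesis
    by (subst lborel_eq, subst integral_distr)
      (auto simp: inner_sum_scaleR_Basis product_integral_prod assms cong: prod.cong)
qed

lemma gauss_density_nonneg: "0 \<le> gauss_density \<sigma> \<mu> y"
  by (simp add: gauss_density_def)

lemma borel_measurable_gauss_density[measurable]: "gauss_density \<sigma> \<mu> \<in> borel_measurable borel"
  unfolding gauss_density_def by measurable

lemma gauss_density_eq_prod_normal_density: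
  fixes \<mu> y :: "'a::euclidean_space"
  assumes "\<sigma> > 0"
  shows "gauss_density \<sigma> \<mu> y = (\<Prod>b\<in>Basis. normal_density (\<mu> \<bullet> b) \<sigma> (y \<bullet> b))"
proof -
  define A where "A = 2 * pi * \<sigma>\<^sup>2"
  have "A > 0" using assms by (simp add: A_def)
  have norm_sq: "(norm (y - \<mu>))\<^sup>2 = (\<Sum>b\<in>Basis. (y \<bullet> b - \<mu> \<bullet> b)\<^sup>2)"
  proof -
    have "(norm (y - \<mu>))\<^sup>2 = (\<Sum>b\<in>Basis. ((y - \<mu>) \<bullet> b) * ((y - \<mu>) \<bullet> b))"
      unfolding power2_norm_eq_inner by (rule euclidean_inner)
    then show ?thesis by (simp add: inner_diff_left power2_eq_square)
  qed
  have "(\<Prod>b\<in>Basis. normal_density (\<mu> \<bullet> b) \<sigma> (y \<bullet> b))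
      = (\<Prod>b\<in>(Basis::'a set). 1 / sqrt A) * (\<Prod>b\<in>Basis. exp (-(y \<bullet> b - \<mu> \<bullet> b)\<^sup>2 / (2 * \<sigma>\<^sup>2)))"
    by (simp only: prod.distrib[symmetric] normal_density_def A_def)
  also have "(\<Prod>b\<in>(Basis::'a set). exp (-(y \<bullet> b - \<mu> \<bullet> b)\<^sup>2 / (2 * \<sigma>\<^sup>2)))
      = exp (- (norm (y - \<mu>))\<^sup>2 / (2 * \<sigma>\<^sup>2))"
    by (simp add: exp_sum[symmetric] norm_sq sum_divide_distrib sum_negf)
  also have "(\<Prod>b\<in>(Basis::'a set). 1 / sqrt A) = (A powr (-1/2)) ^ DIM('a)"
    using \<open>A > 0\<close> by (simp add: powr_half_sqrt[symmetric] powr_minus_divide)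
  also have "\<dots> = A powr (- real DIM('a) / 2)"
    using \<open>A > 0\<close> by (simp add: powr_power)
  finally show ?thesis by (simp add: gauss_density_def A_def)
qed

lemma
  assumes "\<sigma> > 0"
  shows integrable_normal_moment_nz_2: "integrable lborel (\<lambda>t. normal_density m \<sigma> t * t * t)"
    and integral_normal_moment_nz_2: "(\<integral>t. normal_density m \<sigma> t * t * t \<partial>lborel) = m\<^sup>2 + \<sigma>\<^sup>2"
proof -
  have split: "normal_density m \<sigma> t * t * t = normal_density m \<sigma> t * (t - m)^2
      + 2 * m * (normal_density m \<sigma> t * t) - m\<^sup>2 * normal_density m \<sigma> t" for t
    by (simp add: power2_eq_square algebra_simps)
  have variance: "(\<integral>t. normal_density m \<sigma> t * (t - m)^2 \<partial>lborel) = \<sigma>\<^sup>2"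
    using integral_normal_moment_even[OF assms, of m 1] by (simp add: numeral_2_eq_2)
  note integrable = integrable_normal_moment[OF assms, of m 2]
    integrable_normal_moment_nz_1[OF assms, of m] integrable_normal_density[OF assms, of m]
  show "integrable lborel (\<lambda>t. normal_density m \<sigma> t * t * t)"
    unfolding split using integrable by auto
  show "(\<integral>t. normal_density m \<sigma> t * t * t \<partial>lborel) = m\<^sup>2 + \<sigma>\<^sup>2"
    unfolding split using integrable variance integral_normal_moment_nz_1[OF assms]
      integral_normal_density[OF assms, of m]
    by (simp add: power2_eq_square)
qed

lemma
  fixes \<mu> :: "'a::euclidean_space"
  assumes "\<sigma> > 0" and "b \<in> Basis" and "c \<in> Basis"
  shows integrable_gauss_density_cross_moment:
      "integrable lborel (\<lambda>y::'a. gauss_density \<sigma> \<mu> y * (y \<bullet> b) * (y \<bullet> c))"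
    and integral_gauss_density_cross_moment:
      "(\<integral>y. gauss_density \<sigma> \<mu> y * (y \<bullet> b) * (y \<bullet> c) \<partial>lborel)
         = (\<mu> \<bullet> b) * (\<mu> \<bullet> c) + (if b = c then \<sigma>\<^sup>2 else 0)"
proof -
  define f where "f i t = normal_density (\<mu> \<bullet> i) \<sigma> t * (if i = b then t else 1) * (if i = c then t else 1)"
    for i t
  have prod_f: "(\<Prod>i\<in>Basis. f i (y \<bullet> i)) = gauss_density \<sigma> \<mu> y * (y \<bullet> b) * (y \<bullet> c)" for y :: 'a
    unfolding f_def gauss_density_eq_prod_normal_density[OF \<open>\<sigma> > 0\<close>] prod.distrib
    using assms(2,3) by simp
  have integrable_f: "integrable lborel (f i)" for i
    unfolding f_def using assms(1)
    by (cases "i = b"; cases "i = c")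
      (auto simp: integrable_normal_moment_nz_1 integrable_normal_moment_nz_2)
  have integral_f: "integral\<^sup>L lborel (f i) = (if i = b then \<mu> \<bullet> i else 1) * (if i = c then \<mu> \<bullet> i else 1)
      + (if i = b \<and> i = c then \<sigma>\<^sup>2 else 0)" for i
    unfolding f_def using assms(1)
    by (cases "i = b"; cases "i = c")
      (auto simp: power2_eq_square integral_normal_moment_nz_1 integral_normal_moment_nz_2)
  show "integrable lborel (\<lambda>y::'a. gauss_density \<sigma> \<mu> y * (y \<bullet> b) * (y \<bullet> c))"
    using integrable_lborel_prod_Basis[of f, OF integrable_f] by (simp add: prod_f)
  have "(\<integral>y. gauss_density \<sigma> \<mu> y * (y \<bullet> b) * (y \<bullet> c) \<partial>lborel) = (\<Prod>i\<in>Basis. integral\<^sup>L lborel (f i))"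
    using integral_lborel_prod_Basis[of f, OF integrable_f] by (simp add: prod_f)
  also have "\<dots> = (\<mu> \<bullet> b) * (\<mu> \<bullet> c) + (if b = c then \<sigma>\<^sup>2 else 0)"
  proof (cases "b = c")
    case True
    then have "(\<Prod>i\<in>Basis. integral\<^sup>L lborel (f i))
        = (\<Prod>i\<in>(Basis::'a set). if i = b then (\<mu> \<bullet> b) * (\<mu> \<bullet> b) + \<sigma>\<^sup>2 else 1)"
      unfolding integral_f by (intro prod.cong) auto
    then show ?thesis using assms(2) True by simp
  next
    case False
    then have "(\<Prod>i\<in>Basis. integral\<^sup>L lborel (f i))
        = (\<Prod>i\<in>(Basis::'a set). (if i = b then \<mu> \<bullet> i else 1) * (if i = c then \<mu> \<bullet> i else 1))"
      unfolding integral_f by (intro prod.cong) auto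
    also have "\<dots> = (\<mu> \<bullet> b) * (\<mu> \<bullet> c)"
      unfolding prod.distrib using assms(2,3) by simp
    finally show ?thesis using False by simp
  qed
  finally show "(\<integral>y. gauss_density \<sigma> \<mu> y * (y \<bullet> b) * (y \<bullet> c) \<partial>lborel)
      = (\<mu> \<bullet> b) * (\<mu> \<bullet> c) + (if b = c then \<sigma>\<^sup>2 else 0)" .
qed

lemma
  fixes \<mu> :: "'a::euclidean_space"
  assumes "\<sigma> > 0"
  shows integrable_gauss_density: "integrable lborel (gauss_density \<sigma> \<mu>)"
    and integral_gauss_density: "integral\<^sup>L lborel (gauss_density \<sigma> \<mu>) = 1"
proof -
  have "gauss_density \<sigma> \<mu> = (\<lambda>y. \<Prod>i\<in>Basis. normal_density (\<mu> \<bullet> i) \<sigma> (y \<bullet> i))"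
    using gauss_density_eq_prod_normal_density[OF assms] by auto
  then show "integrable lborel (gauss_density \<sigma> \<mu>)" "integral\<^sup>L lborel (gauss_density \<sigma> \<mu>) = 1"
    using integrable_lborel_prod_Basis[of "\<lambda>i. normal_density (\<mu> \<bullet> i) \<sigma>"]
      integral_lborel_prod_Basis[of "\<lambda>i. normal_density (\<mu> \<bullet> i) \<sigma>"] assms
    by simp_all
qed

lemma
  fixes \<mu> u :: "'a::euclidean_space"
  assumes "\<sigma> > 0"
  shows integrable_gauss_density_inner_sq:
      "integrable lborel (\<lambda>y. gauss_density \<sigma> \<mu> y * (y \<bullet> u)\<^sup>2)"
    and integral_gauss_density_inner_sq:
      "(\<integral>y. gauss_density \<sigma> \<mu> y * (y \<bullet> u)\<^sup>2 \<partial>lborel) = (\<mu> \<bullet> u)\<^sup>2 + \<sigma>\<^sup>2 * (norm u)\<^sup>2"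
proof -
  define g where "g b c y = (u \<bullet> b) * (u \<bullet> c) * (gauss_density \<sigma> \<mu> y * (y \<bullet> b) * (y \<bullet> c))" for b c y
  have expand: "gauss_density \<sigma> \<mu> y * (y \<bullet> u)\<^sup>2 = (\<Sum>b\<in>Basis. \<Sum>c\<in>Basis. g b c y)" for y
  proof -
    have "(y \<bullet> u)\<^sup>2 = (\<Sum>b\<in>Basis. (y \<bullet> b) * (u \<bullet> b)) * (\<Sum>c\<in>Basis. (y \<bullet> c) * (u \<bullet> c))"
      by (simp add: power2_eq_square euclidean_inner[of y u])
    then show ?thesis
      by (simp add: g_def sum_product sum_distrib_left algebra_simps)
  qed
  have integrable_g: "integrable lborel (g b c)" if "b \<in> Basis" "c \<in> Basis" for b c
    unfolding g_def using assms that by (intro integrable_mult_right integrable_gauss_density_cross_moment)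
  show "integrable lborel (\<lambda>y. gauss_density \<sigma> \<mu> y * (y \<bullet> u)\<^sup>2)"
    unfolding expand by (intro Bochner_Integration.integrable_sum integrable_g)
  have integral_g: "integral\<^sup>L lborel (g b c) = (u \<bullet> b) * (\<mu> \<bullet> b) * ((u \<bullet> c) * (\<mu> \<bullet> c))
      + (if c = b then \<sigma>\<^sup>2 * ((u \<bullet> b) * (u \<bullet> b)) else 0)" if "b \<in> Basis" "c \<in> Basis" for b c
    unfolding g_def integral_mult_right_zero integral_gauss_density_cross_moment[OF assms that]
    by (simp add: algebra_simps)
  have "(\<integral>y. gauss_density \<sigma> \<mu> y * (y \<bullet> u)\<^sup>2 \<partial>lborel) = (\<Sum>b\<in>Basis. \<Sum>c\<in>Basis. integral\<^sup>L lborel (g b c))"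
    unfolding expand
    by (simp add: integrable_g Bochner_Integration.integral_sum)
  also have "\<dots> = (\<Sum>b\<in>Basis. \<Sum>c\<in>Basis. (u \<bullet> b) * (\<mu> \<bullet> b) * ((u \<bullet> c) * (\<mu> \<bullet> c))
          + (if c = b then \<sigma>\<^sup>2 * ((u \<bullet> b) * (u \<bullet> b)) else 0))"
    by (simp add: integral_g)
  also have "\<dots> = (\<mu> \<bullet> u)\<^sup>2 + \<sigma>\<^sup>2 * (norm u)\<^sup>2"
  proof -
    have "(norm u)\<^sup>2 = (\<Sum>b\<in>Basis. (u \<bullet> b) * (u \<bullet> b))"
      unfolding power2_norm_eq_inner by (rule euclidean_inner)
    then show ?thesis
      by (simp add: sum.distrib sum_distrib_left power2_eq_square euclidean_inner[of \<mu> u]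
          sum_product algebra_simps)
  qed
  finally show "(\<integral>y. gauss_density \<sigma> \<mu> y * (y \<bullet> u)\<^sup>2 \<partial>lborel) = (\<mu> \<bullet> u)\<^sup>2 + \<sigma>\<^sup>2 * (norm u)\<^sup>2" .
qed

lemma prob_space_gmm_measure:
  assumes "\<sigma> > 0"
  shows "prob_space (gmm_measure \<sigma> (\<theta>s::'a::euclidean_space))"
proof
  let ?h = "\<lambda>y. 1/2 * gauss_density \<sigma> \<theta>s y + 1/2 * gauss_density \<sigma> (- \<theta>s) y"
  have "integrable lborel ?h"
    using assms by (intro Bochner_Integration.integrable_add integrable_mult_right integrable_gauss_density)
  then have "(\<integral>\<^sup>+y. ennreal (?h y) \<partial>lborel) = ennreal (integral\<^sup>L lborel ?h)"
    by (intro nn_integral_eq_integral) (auto simp: gauss_density_nonneg)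
  also have "integral\<^sup>L lborel ?h = 1"
    using assms by (simp add: integrable_gauss_density integral_gauss_density)
  finally show "emeasure (gmm_measure \<sigma> \<theta>s) (space (gmm_measure \<sigma> \<theta>s)) = 1"
    by (simp add: gmm_measure_def emeasure_density)
qed

lemma
  fixes \<theta>s u :: "'a::euclidean_space"
  assumes "\<sigma> > 0"
  shows integrable_gmm_measure_inner_sq: "integrable (gmm_measure \<sigma> \<theta>s) (\<lambda>y. (y \<bullet> u)\<^sup>2)"
    and integral_gmm_measure_inner_sq:
      "(\<integral>y. (y \<bullet> u)\<^sup>2 \<partial>gmm_measure \<sigma> \<theta>s) = (\<theta>s \<bullet> u)\<^sup>2 + \<sigma>\<^sup>2 * (norm u)\<^sup>2"
proof -
  define h where "h y = 1/2 * gauss_density \<sigma> \<theta>s y + 1/2 * gauss_density \<sigma> (- \<theta>s) y" for y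
  have [measurable]: "h \<in> borel_measurable lborel" unfolding h_def by measurable
  have h_nonneg: "AE y in lborel. 0 \<le> h y" unfolding h_def by (simp add: gauss_density_nonneg)
  have gmm: "gmm_measure \<sigma> \<theta>s = density lborel h" unfolding gmm_measure_def h_def ..
  have mixture: "h y * (y \<bullet> u)\<^sup>2 = 1/2 * (gauss_density \<sigma> \<theta>s y * (y \<bullet> u)\<^sup>2)
      + 1/2 * (gauss_density \<sigma> (- \<theta>s) y * (y \<bullet> u)\<^sup>2)" for y
    by (simp add: h_def algebra_simps)
  show "integrable (gmm_measure \<sigma> \<theta>s) (\<lambda>y. (y \<bullet> u)\<^sup>2)"
    unfolding gmm using assms
    by (subst integrable_density[OF _ _ h_nonneg])
      (simp_all add: mixture integrable_gauss_density_inner_sq)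
  show "(\<integral>y. (y \<bullet> u)\<^sup>2 \<partial>gmm_measure \<sigma> \<theta>s) = (\<theta>s \<bullet> u)\<^sup>2 + \<sigma>\<^sup>2 * (norm u)\<^sup>2"
    unfolding gmm using assms
    by (subst integral_density[OF _ _ h_nonneg])
      (simp_all add: mixture integrable_gauss_density_inner_sq integral_gauss_density_inner_sq)
qed

lemma abs_le_sq_add_sq_div:
  fixes x c :: real
  assumes "c > 0"
  shows "\<bar>x\<bar> \<le> (x\<^sup>2 + c\<^sup>2) / (2 * c)"
proof -
  have "2 * c * \<bar>x\<bar> \<le> x\<^sup>2 + c\<^sup>2"
    using sum_power2_ge_zero[of "\<bar>x\<bar> - c" 0] by (simp add: power2_eq_square algebra_simps)
  then show ?thesis using assms by (simp add: field_simps)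
qed

lemma norm_integral_weighted_le:
  fixes M :: "'a::euclidean_space measure" and w :: "'a \<Rightarrow> real"
  assumes "prob_space M" and "c > 0"
    and weight: "\<And>y. 0 \<le> w y" "\<And>y. w y \<le> 1"
    and moment_integrable: "\<And>u. norm u = 1 \<Longrightarrow> integrable M (\<lambda>y. (y \<bullet> u)\<^sup>2)"
    and moment_bound: "\<And>u. norm u = 1 \<Longrightarrow> (\<integral>y. (y \<bullet> u)\<^sup>2 \<partial>M) \<le> K"
  shows "norm (\<integral>y. w y *\<^sub>R y \<partial>M) \<le> (K + c\<^sup>2) / (2 * c)"
proof -
  interpret prob_space M by fact
  define v where "v = (\<integral>y. w y *\<^sub>R y \<partial>M)"
  obtain b :: 'a where "b \<in> Basis" using nonempty_Basis by blast
  have "0 \<le> (\<integral>y. (y \<bullet> b)\<^sup>2 \<partial>M)"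
    by (rule Bochner_Integration.integral_nonneg) simp
  also have "\<dots> \<le> K"
    using moment_bound \<open>b \<in> Basis\<close> by simp
  finally have "0 \<le> K" .
  show ?thesis
  proof (cases "v = 0")
    case True
    then show ?thesis using \<open>0 \<le> K\<close> \<open>c > 0\<close> by (simp add: v_def)
  next
    case False
    \<comment> \<open>a non-integrable integrand has Bochner integral 0\<close>
    then have integrable: "integrable M (\<lambda>y. w y *\<^sub>R y)"
      using not_integrable_integral_eq unfolding v_def by blast
    define u where "u = v /\<^sub>R norm v"
    have "norm u = 1" using False by (simp add: u_def)
    have integrable_u: "integrable M (\<lambda>y. w y * (y \<bullet> u))"
      using integrable_inner_left[OF integrable, of u] by simp
    have pointwise: "w y * (y \<bullet> u) \<le> 1 / (2 * c) * (y \<bullet> u)\<^sup>2 + c / 2" for y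
    proof -
      have "w y * (y \<bullet> u) \<le> \<bar>y \<bullet> u\<bar>"
        using weight[of y] mult_left_le_one_le[of "\<bar>y \<bullet> u\<bar>" "w y"] abs_ge_self[of "w y * (y \<bullet> u)"]
        by (simp add: abs_mult)
      also have "\<dots> \<le> ((y \<bullet> u)\<^sup>2 + c\<^sup>2) / (2 * c)" using \<open>c > 0\<close> by (rule abs_le_sq_add_sq_div)
      finally show ?thesis using \<open>c > 0\<close> by (simp add: field_simps power2_eq_square)
    qed
    have "norm v = v \<bullet> u"
      using False by (simp add: u_def power2_norm_eq_inner[symmetric] power2_eq_square)
    also have "\<dots> = (\<integral>y. w y * (y \<bullet> u) \<partial>M)"
      unfolding v_def using integrable by (simp flip: integral_inner_left)
    also have "\<dots> \<le> (\<integral>y. 1 / (2 * c) * (y \<bullet> u)\<^sup>2 + c / 2 \<partial>M)"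
      using integrable_u moment_integrable[OF \<open>norm u = 1\<close>] pointwise by (intro integral_mono) auto
    also have "\<dots> = 1 / (2 * c) * (\<integral>y. (y \<bullet> u)\<^sup>2 \<partial>M) + c / 2"
      using moment_integrable[OF \<open>norm u = 1\<close>] by (simp add: prob_space)
    also have "\<dots> \<le> 1 / (2 * c) * K + c / 2"
      using moment_bound[OF \<open>norm u = 1\<close>] \<open>c > 0\<close> by (simp add: divide_right_mono)
    also have "\<dots> = (K + c\<^sup>2) / (2 * c)"
      using \<open>c > 0\<close> by (simp add: field_simps power2_eq_square)
    finally show ?thesis unfolding v_def .
  qed
qed

lemma omega_nonneg: "0 \<le> omega t"
  by (simp add: omega_def add_pos_pos)

lemma omega_le_one: "omega t \<le> 1"
  unfolding omega_def by (simp add: add_pos_pos)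

lemma norm_EM_op_le:
  fixes \<theta>s \<theta> :: "'a::euclidean_space"
  assumes "\<sigma> > 0" and "\<theta>s \<noteq> 0"
  shows "norm (EM_op \<sigma> \<theta>s \<theta>) \<le> 2 * norm \<theta>s + \<sigma>\<^sup>2 / norm \<theta>s"
proof -
  have "norm (\<integral>y. omega (\<theta> \<bullet> y / \<sigma>\<^sup>2) *\<^sub>R y \<partial>gmm_measure \<sigma> \<theta>s)
      \<le> (((norm \<theta>s)\<^sup>2 + \<sigma>\<^sup>2) + (norm \<theta>s)\<^sup>2) / (2 * norm \<theta>s)"
  proof (rule norm_integral_weighted_le)
    fix u :: 'a
    assume "norm u = 1"
    then have "(\<theta>s \<bullet> u)\<^sup>2 \<le> (norm \<theta>s)\<^sup>2"
      using Cauchy_Schwarz_ineq2[of \<theta>s u] abs_le_square_iff[of "\<theta>s \<bullet> u" "norm \<theta>s"] by simp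
    then show "(\<integral>y. (y \<bullet> u)\<^sup>2 \<partial>gmm_measure \<sigma> \<theta>s) \<le> (norm \<theta>s)\<^sup>2 + \<sigma>\<^sup>2"
      using \<open>norm u = 1\<close> assms(1) by (simp add: integral_gmm_measure_inner_sq)
  qed (use assms in \<open>auto simp: prob_space_gmm_measure omega_nonneg omega_le_one
      integrable_gmm_measure_inner_sq\<close>)
  also have "\<dots> = norm \<theta>s + \<sigma>\<^sup>2 / (2 * norm \<theta>s)"
    using assms(2) by (simp add: field_simps power2_eq_square)
  finally show ?thesis by (simp add: EM_op_def)
qed

lemma norm_EM_op_less:
  fixes \<theta>s \<theta> :: "'a::euclidean_space"
  assumes "\<sigma> > 0" and "\<sigma> < norm \<theta>s"
  shows "norm (EM_op \<sigma> \<theta>s \<theta>) < 3 * norm \<theta>s"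
proof -
  have "0 < norm \<theta>s"
    using assms by linarith
  have "\<sigma>\<^sup>2 < (norm \<theta>s)\<^sup>2"
    using assms by (simp add: power_strict_mono)
  then have "\<sigma>\<^sup>2 / norm \<theta>s < norm \<theta>s"
    using \<open>0 < norm \<theta>s\<close> by (simp add: divide_less_eq power2_eq_square)
  then show ?thesis
    using \<open>0 < norm \<theta>s\<close> norm_EM_op_le[OF assms(1), of \<theta>s \<theta>] by simp
qed

lemma kappa_radius_snr_bounds:
  fixes a \<kappa> r s :: real
  assumes "0 < a" and "a < 1" and "0 < \<kappa>" and "\<kappa> < 1" and "0 < s"
    and "4 / \<kappa> \<le> r" and "r \<le> a * s / sqrt (5 * ln (8 / \<kappa>))"
  shows "4 \<le> \<kappa> * r" and "1 < s"
proof -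
  show "4 \<le> \<kappa> * r"
    using assms(3,6) by (simp add: field_simps)
  have "4 < 4 / \<kappa>"
    using assms(3,4) by (simp add: field_simps)
  then have "1 < r"
    using assms(6) by linarith
  have "\<kappa> * exp 1 \<le> 8"
    using exp_le assms(4) mult_mono[of \<kappa> 1 "exp 1" 3] by simp
  then have "exp 1 \<le> 8 / \<kappa>"
    using assms(3) by (simp add: field_simps)
  then have "1 \<le> ln (8 / \<kappa>)"
    using assms(3) by (subst ln_ge_iff) auto
  then have "1 \<le> sqrt (5 * ln (8 / \<kappa>))"
    by simp
  then have "a * s / sqrt (5 * ln (8 / \<kappa>)) \<le> a * s"
    using assms(1,5) by (simp add: pos_divide_le_eq mult_left_le)
  also have "\<dots> < s"
    using assms(2,5) by simp
  finally show "1 < s"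
    using \<open>1 < r\<close> assms(7) by linarith
qed

theorem lemma3:
  fixes \<sigma> a \<kappa>\<^sub>2 r :: real and \<theta>s \<theta> :: "'a::euclidean_space"
  assumes "\<sigma> > 0" and "\<theta>s \<noteq> 0"
    and "0 < a" and "a < 1"
    and "0 < \<kappa>\<^sub>2" and "\<kappa>\<^sub>2 < 1"
    and "4 / \<kappa>\<^sub>2 \<le> r"
    and "r \<le> a * snr \<sigma> \<theta>s / sqrt (5 * ln (8 / \<kappa>\<^sub>2))"
    and "\<theta> \<in> D_set \<theta>s a r"
  shows "norm (EM_op \<sigma> \<theta>s \<theta>) < \<kappa>\<^sub>2 * r * norm \<theta>s"
proof -
  have "0 < snr \<sigma> \<theta>s"
    using assms(1,2) by (simp add: snr_def)
  then have "4 \<le> \<kappa>\<^sub>2 * r" and "1 < snr \<sigma> \<theta>s"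
    using kappa_radius_snr_bounds[OF assms(3-6) _ assms(7,8)] by auto
  then have "\<sigma> < norm \<theta>s"
    using assms(1) by (simp add: snr_def field_simps)
  then have "norm (EM_op \<sigma> \<theta>s \<theta>) < 3 * norm \<theta>s"
    using norm_EM_op_less[OF assms(1)] by blast
  also have "\<dots> \<le> \<kappa>\<^sub>2 * r * norm \<theta>s"
    using \<open>4 \<le> \<kappa>\<^sub>2 * r\<close> by (simp add: mult_right_mono)
  finally show ?thesis .
qed

end
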